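(* Assume the standing setting in the context. Fix $e\in\mathcal E^d$, $M>0$, $x\in\mathbb Z^d$, and suppose $e\in\pi^{(x)}$ and $\tau_e\ge M$. Then for any $k\in\mathbb N$ such that ${S^e_k}'$ encloses neither $0$ nor $x$, the edge $e$ is $(k,M)$-large.
   Context: Setting: $d\ge2$, i.i.d. non-negative weights $\tau_e$ on the nearest-neighbor edges $\mathcal E^d$ of $\mathbb Z^d$, with the standing assumption $F(r)<p_c(d)$ if $r=0$ and $F(r)<\vec p_c(d)$ if $r>0$ ($F$ the distribution function, $r$ the essential infimum, $p_c,\vec p_c$ the bond and oriented bond percolation thresholds). $T(\gamma)=\sum_{e\in\gamma}\tau_e$; $\pi^{(x)}$ is the first (in a fixed deterministic ordering of finite vertex self-avoiding paths) vertex self-avoiding path from $0$ to $x$ minimizing $T$. For $e=\{a,b\}$ let $v_e$ be the endpoint of smaller $\ell^1$ norm. For $k\ge1$: ${S^e_k}'=\{z\in\mathbb Z^d:|v_e-z|_\infty=k\}$ and $S^e_k=\{\{u,w\}\in\mathcal E^d:u,w\in{S^e_k}'\}$; ${S^e_0}'$ is the set of the two endpoints of $e$ and $S^e_0=\{e\}$. For $u,w\in{S^e_h}'$, $T_{S^e_h}(u,w)$ is the minimum of $T(\gamma)$ over self-avoiding paths from $u$ to $w$ using only edges of $S^e_h$. The edge $e$ is $(k,M)$-large if for each $h=0,1,\dots,k$ there exist $u,w\in{S^e_h}'$ with $T_{S^e_h}(u,w)\ge M$. A set ${S^e_k}'$ encloses a vertex $y$ if $y$ is not in the unbounded component of $\mathbb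 Z^d\setminus{S^e_k}'$. *)

theory Defs
  imports "HOL-Analysis.Analysis"
begin

type_synonym 'd vtx = "int ^ 'd"
type_synonym 'd edge = "'d vtx set"

definition l1 :: "'d::finite vtx \<Rightarrow> int" where
  "l1 z = (\<Sum>i\<in>UNIV. \<bar>z $ i\<bar>)"

definition linf :: "'d::finite vtx \<Rightarrow> int" where
  "linf z = Max ((\<lambda>i. \<bar>z $ i\<bar>) ` UNIV)"

definition adj :: "'d::finite vtx \<Rightarrow> 'd vtx \<Rightarrow> bool" where
  "adj u w \<longleftrightarrow> l1 (u - w) = 1"

definition edges :: "'d::finite edge set" where
  "edges = {{u, w} | u w. adj u w}"

definition is_walk :: "'d::finite vtx list \<Rightarrow> bool" where
  "is_walk p \<longleftrightarrow> p \<noteq> [] \<and> (\<forall>i. Suc i < length p \<longrightarrow> adj (p ! i) (p ! Suc i))"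

definition path_edges :: "'d::finite vtx list \<Rightarrow> 'd edge set" where
  "path_edges p = {{p ! i, p ! Suc i} | i. Suc i < length p}"

definition sap :: "'d::finite vtx \<Rightarrow> 'd vtx \<Rightarrow> 'd vtx list \<Rightarrow> bool" where
  "sap u w p \<longleftrightarrow> is_walk p \<and> distinct p \<and> hd p = u \<and> last p = w"

definition T :: "('d::finite edge \<Rightarrow> real) \<Rightarrow> 'd vtx list \<Rightarrow> real" where
  "T \<tau> p = (\<Sum>i<length p - 1. \<tau> {p ! i, p ! Suc i})"

definition geodesic :: "('d::finite edge \<Rightarrow> real) \<Rightarrow> 'd vtx \<Rightarrow> 'd vtx list \<Rightarrow> bool" where
  "geodesic \<tau> x p \<longleftrightarrow> sap 0 x p \<and> (\<forall>q. sap 0 x q \<longrightarrow> T \<tau> p \<le> T \<tau> q)"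

text \<open>pi^(x): the first geodesic w.r.t. a fixed deterministic ordering (an injective
  enumeration @ord@ of finite vertex lists).\<close>
definition first_geodesic ::
  "('d::finite vtx list \<Rightarrow> nat) \<Rightarrow> ('d edge \<Rightarrow> real) \<Rightarrow> 'd vtx \<Rightarrow> 'd vtx list \<Rightarrow> bool" where
  "first_geodesic ord \<tau> x p \<longleftrightarrow> geodesic \<tau> x p \<and> (\<forall>q. geodesic \<tau> x q \<longrightarrow> ord p \<le> ord q)"

definition v_e :: "'d::finite edge \<Rightarrow> 'd vtx" where
  "v_e e = (SOME v. v \<in> e \<and> (\<forall>w\<in>e. l1 v \<le> l1 w))"

definition Sv :: "'d::finite edge \<Rightarrow> nat \<Rightarrow> 'd vtx set" where
  "Sv e k = (if k = 0 then e else {z. linf (v_e e - z) = int k})"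

definition Se :: "'d::finite edge \<Rightarrow> nat \<Rightarrow> 'd edge set" where
  "Se e k = (if k = 0 then {e} else {{u, w} | u w. adj u w \<and> u \<in> Sv e k \<and> w \<in> Sv e k})"

definition T_restr :: "('d::finite edge \<Rightarrow> real) \<Rightarrow> 'd edge set \<Rightarrow> 'd vtx \<Rightarrow> 'd vtx \<Rightarrow> real" where
  "T_restr \<tau> S u w = Inf (T \<tau> ` {p. sap u w p \<and> path_edges p \<subseteq> S})"

definition large :: "('d::finite edge \<Rightarrow> real) \<Rightarrow> 'd edge \<Rightarrow> nat \<Rightarrow> real \<Rightarrow> bool" where
  "large \<tau> e k M \<longleftrightarrow>
     (\<forall>h\<le>k. \<exists>u\<in>Sv e h. \<exists>w\<in>Sv e h. T_restr \<tau> (Se e h) u w \<ge> M)"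

definition conn_avoid :: "'d::finite vtx set \<Rightarrow> 'd vtx \<Rightarrow> 'd vtx \<Rightarrow> bool" where
  "conn_avoid A y z \<longleftrightarrow> (\<exists>p. is_walk p \<and> hd p = y \<and> last p = z \<and> set p \<inter> A = {})"

text \<open>A encloses y iff y is not in the unbounded (infinite) component of Z^d minus A.\<close>
definition encloses :: "'d::finite vtx set \<Rightarrow> 'd vtx \<Rightarrow> bool" where
  "encloses A y \<longleftrightarrow> \<not> (y \<notin> A \<and> infinite {z. conn_avoid A y z})"

end

theory Submission
  imports Defs
begin

(* Let e = {\<pi>_i, \<pi>_(i+1)} and v = v_e. Along \<pi> the quantity |v - \<pi>_n|_\<infinity> changes by at
   most one per step; it is at most 1 at n = i, i+1 and, as S'_k encloses neither 0 nor x, it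
   exceeds k at both ends of \<pi>. Hence \<pi> meets S'_h at some \<pi>_a with a \<le> i and some \<pi>_b with
   b > i. Every path r from \<pi>_a to \<pi>_b costs at least \<tau>_e: otherwise replacing the segment of \<pi>
   between them, which contains e, by r and erasing loops would give a cheaper self-avoiding
   path from 0 to x. Finally, for h \<ge> 1 the sphere S'_h is connected when d \<ge> 2, so the
   infimum defining T_(S_h)(\<pi>_a, \<pi>_b) is taken over a nonempty set. *)

section \<open>Walks and passage times\<close>

lemma not_is_walk_Nil [simp]: "\<not> is_walk []"
  by (simp add: is_walk_def)

lemma is_walk_singleton [simp]: "is_walk [x]"
  by (simp add: is_walk_def)

lemma is_walk_Cons_Cons [simp]: "is_walk (x # y # p) \<longleftrightarrow> adj x y \<and> is_walk (y # p)"
  unfolding is_walk_def by (auto simp: All_less_Suc2)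

lemma T_singleton [simp]: "T \<tau> [x] = 0"
  by (simp add: T_def)

lemma T_Cons_Cons [simp]: "T \<tau> (x # y # p) = \<tau> {x, y} + T \<tau> (y # p)"
  unfolding T_def by (simp add: sum.lessThan_Suc_shift del: sum.lessThan_Suc)

lemma walk_step_in_edges: "is_walk p \<Longrightarrow> Suc m < length p \<Longrightarrow> {p ! m, p ! Suc m} \<in> edges"
  unfolding is_walk_def edges_def by blast

lemma T_take_Suc:
  assumes "n < length p"
  shows "T \<tau> (take (Suc n) p) = (\<Sum>m<n. \<tau> {p ! m, p ! Suc m})"
proof -
  have "length (take (Suc n) p) - 1 = n" using assms by simp
  then show ?thesis unfolding T_def by (intro sum.cong) auto
qed

lemma T_drop: "T \<tau> (drop n p) = (\<Sum>m\<in>{n..<length p - 1}. \<tau> {p ! m, p ! Suc m})"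
proof (cases "n < length p")
  case True
  have "{n..<length p - 1} = {0 + n..<(length p - 1 - n) + n}" using True by simp
  then show ?thesis unfolding T_def
    by (simp only: sum.shift_bounds_nat_ivl) (simp add: atLeast0LessThan add.commute)
qed (simp add: T_def)

lemma T_drop_le:
  assumes "\<forall>f\<in>edges. \<tau> f \<ge> 0" "is_walk p"
  shows "T \<tau> (drop n p) \<le> T \<tau> p"
  unfolding T_drop unfolding T_def
proof (intro sum_mono2)
  fix m assume "m \<in> {..<length p - 1} - {n..<length p - 1}"
  then show "0 \<le> \<tau> {p ! m, p ! Suc m}" using assms walk_step_in_edges[of p m] by auto
qed auto

context
  fixes p q :: "'d::finite vtx list"
  assumes nonempty: "p \<noteq> []" "q \<noteq> []" and meet: "last p = hd q"
begin

lemma last_append_tl: "last (p @ tl q) = last q"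
  using nonempty meet by (cases q) auto

lemma is_walk_append_tl: "is_walk p \<Longrightarrow> is_walk q \<Longrightarrow> is_walk (p @ tl q)"
  using nonempty meet by (induction p rule: induct_list012) (auto simp: neq_Nil_conv)

lemma T_append_tl: "T \<tau> (p @ tl q) = T \<tau> p + T \<tau> q"
  using nonempty meet by (induction p rule: induct_list012) (auto simp: neq_Nil_conv)

end

lemma set_append_tl_subset: "set (p @ tl q) \<subseteq> set p \<union> set q"
  by (cases q) auto

lemma adj_commute: "adj a b \<longleftrightarrow> adj b a"
  unfolding adj_def l1_def by (simp add: abs_minus_commute)

lemma is_walk_rev:
  assumes "is_walk p"
  shows "is_walk (rev p)"
  unfolding is_walk_def
proof (intro conjI allI impI)
  fix i assume i: "Suc i < length (rev p)"
  define j where "j = length p - Suc (Suc i)"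
  have j: "Suc j < length p" "Suc j = length p - Suc i" using i by (auto simp: j_def)
  then have "adj (p ! j) (p ! Suc j)" using assms unfolding is_walk_def by blast
  then show "adj (rev p ! i) (rev p ! Suc i)"
    using i j by (simp add: rev_nth adj_commute j_def)
qed (use assms in auto)

lemma is_walk_take: "is_walk p \<Longrightarrow> 0 < n \<Longrightarrow> is_walk (take n p)"
  unfolding is_walk_def by (simp add: nth_take)

lemma is_walk_drop: "is_walk p \<Longrightarrow> n < length p \<Longrightarrow> is_walk (drop n p)"
  unfolding is_walk_def by (simp add: nth_drop)

lemma walk_contains_sap:
  assumes nonneg: "\<forall>f\<in>edges. \<tau> f \<ge> 0"
  shows "is_walk p \<Longrightarrow> \<exists>q. sap (hd p) (last p) q \<and> set q \<subseteq> set p \<and> T \<tau> q \<le> T \<tau> p"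
proof (induction p rule: induct_list012)
  case (2 x)
  show ?case by (intro exI[of _ "[x]"]) (simp add: sap_def)
next
  case (3 x y zs)
  then obtain q where q: "sap y (last (y # zs)) q" "set q \<subseteq> set (y # zs)" "T \<tau> q \<le> T \<tau> (y # zs)"
    by auto
  have q_walk: "is_walk q" "distinct q" "hd q = y" using q(1) by (auto simp: sap_def)
  have "\<tau> {x, y} \<ge> 0" using nonneg walk_step_in_edges[OF "3.prems", of 0] by simp
  show ?case
  proof (cases "x \<in> set q")
    case True
    \<comment> \<open>x # q has a loop: keep only the part of q from its visit to x\<close>
    then obtain n where n: "n < length q" "q ! n = x" by (meson in_set_conv_nth)
    have "sap x (last (x # y # zs)) (drop n q)"
      using q(1) n is_walk_drop[OF q_walk(1) n(1)] unfolding sap_def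
      by (auto simp: last_drop hd_drop_conv_nth)
    moreover have "T \<tau> (drop n q) \<le> T \<tau> (x # y # zs)"
      using T_drop_le[OF nonneg q_walk(1), of n] q(3) \<open>\<tau> {x, y} \<ge> 0\<close> by simp
    ultimately show ?thesis using q(2) set_drop_subset[of n q] by (intro exI[of _ "drop n q"]) auto
  next
    case False
    obtain q' where q': "q = y # q'" using q_walk by (cases q) (auto simp: sap_def)
    have "sap x (last (x # y # zs)) (x # q)"
      using q(1) False "3.prems" q' unfolding sap_def by auto
    then show ?thesis using q(2,3) q' by (intro exI[of _ "x # q"]) auto
  qed
qed simp

section \<open>Connectivity by walks\<close>

definition walk_connected :: "'d::finite vtx set \<Rightarrow> 'd vtx \<Rightarrow> 'd vtx \<Rightarrow> bool" where
  "walk_connected A u w \<longleftrightarrow> (\<exists>p. is_walk p \<and> hd p = u \<and> last p = w \<and> set p \<subseteq> A)"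

lemma walk_connected_refl: "u \<in> A \<Longrightarrow> walk_connected A u u"
  unfolding walk_connected_def by (intro exI[of _ "[u]"]) simp

lemma walk_connected_adj: "adj u w \<Longrightarrow> u \<in> A \<Longrightarrow> w \<in> A \<Longrightarrow> walk_connected A u w"
  unfolding walk_connected_def by (intro exI[of _ "[u, w]"]) simp

lemma walk_connected_trans:
  assumes "walk_connected A u v" "walk_connected A v w"
  shows "walk_connected A u w"
proof -
  obtain p q where p: "is_walk p" "hd p = u" "last p = v" "set p \<subseteq> A"
    and q: "is_walk q" "hd q = v" "last q = w" "set q \<subseteq> A"
    using assms unfolding walk_connected_def by blast
  have "p \<noteq> []" "q \<noteq> []" "last p = hd q" using p q by auto
  note concat = is_walk_append_tl[OF this] last_append_tl[OF this]
  show ?thesis unfolding walk_connected_def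
    using p q concat set_append_tl_subset[of p q] \<open>p \<noteq> []\<close>
    by (intro exI[of _ "p @ tl q"]) auto
qed

lemma walk_connected_sym: "walk_connected A u w \<Longrightarrow> walk_connected A w u"
  unfolding walk_connected_def
  by (metis is_walk_rev hd_rev last_rev not_is_walk_Nil set_rev)

lemma walk_connected_mono: "walk_connected A u w \<Longrightarrow> A \<subseteq> B \<Longrightarrow> walk_connected B u w"
  unfolding walk_connected_def by blast

lemma walk_connected_sap:
  assumes "walk_connected A u w"
  shows "\<exists>q. sap u w q \<and> path_edges q \<subseteq> {{a, b} | a b. adj a b \<and> a \<in> A \<and> b \<in> A}"
proof -
  obtain p where p: "is_walk p" "hd p = u" "last p = w" "set p \<subseteq> A"
    using assms unfolding walk_connected_def by blast
  obtain q where q: "sap u w q" "set q \<subseteq> A"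
    using walk_contains_sap[of "\<lambda>_. 0", OF _ p(1)] p by auto
  have "path_edges q \<subseteq> {{a, b} | a b. adj a b \<and> a \<in> A \<and> b \<in> A}"
    using q unfolding path_edges_def sap_def is_walk_def by (fastforce dest: nth_mem)
  then show ?thesis using q(1) by blast
qed

section \<open>Spheres of the sup-norm\<close>

lemma abs_nth_le_linf: "\<bar>z $ i\<bar> \<le> linf z"
  unfolding linf_def by (rule Max_ge) auto

lemma linf_le_iff: "linf z \<le> c \<longleftrightarrow> (\<forall>i. \<bar>z $ i\<bar> \<le> c)"
  unfolding linf_def by (subst Max_le_iff) auto

lemma linf_attained: "\<exists>i. linf z = \<bar>z $ i\<bar>"
proof -
  have "linf z \<in> (\<lambda>i. \<bar>z $ i\<bar>) ` UNIV" unfolding linf_def by (rule Max_in) auto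
  then show ?thesis by auto
qed

lemma linf_eq_iff: "linf z = c \<longleftrightarrow> (\<forall>i. \<bar>z $ i\<bar> \<le> c) \<and> (\<exists>i. \<bar>z $ i\<bar> = c)"
  by (metis abs_nth_le_linf linf_attained linf_le_iff order_antisym)

lemma linf_le_1_if_adj: "adj u w \<Longrightarrow> linf (u - w) \<le> 1"
  unfolding linf_le_iff adj_def l1_def
  by (metis (no_types, lifting) UNIV_I finite member_le_sum abs_ge_zero)

lemma linf_le_1_if_mem_edge:
  assumes "adj u w" "v \<in> {u, w}" "y \<in> {u, w}"
  shows "linf (v - y) \<le> 1"
proof (cases "v = y")
  case False
  with assms have "adj v y" by (metis adj_commute insertE singletonD)
  then show ?thesis by (rule linf_le_1_if_adj)
qed (simp add: linf_le_iff)

lemma linf_diff_adj_le_1: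
  assumes "adj a b"
  shows "\<bar>linf (v - a) - linf (v - b)\<bar> \<le> 1"
proof -
  have step: "\<bar>a $ i - b $ i\<bar> \<le> 1" for i
    using linf_le_1_if_adj[OF assms] abs_nth_le_linf[of "a - b" i] by simp
  have one_side: "linf (v - c) \<le> linf (v - c') + 1" if "c = a \<and> c' = b \<or> c = b \<and> c' = a" for c c'
    unfolding linf_le_iff
  proof
    fix i
    have "\<bar>v $ i - c $ i\<bar> \<le> \<bar>v $ i - c' $ i\<bar> + \<bar>a $ i - b $ i\<bar>" using that by auto
    then show "\<bar>(v - c) $ i\<bar> \<le> linf (v - c') + 1"
      using step[of i] abs_nth_le_linf[of "v - c'" i] by simp
  qed
  show ?thesis using one_side[of a b] one_side[of b a] by (auto simp: abs_le_iff)
qed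

lemma finite_linf_ball: "finite {z :: 'd::finite vtx. linf (v - z) < r}"
proof (rule finite_subset)
  show "{z. linf (v - z) < r} \<subseteq> (\<lambda>f. \<chi> i. f i) ` (Pi\<^sub>E UNIV (\<lambda>i. {v $ i - r .. v $ i + r}))"
  proof
    fix z :: "'d vtx" assume "z \<in> {z. linf (v - z) < r}"
    then have "v $ i - r \<le> z $ i \<and> z $ i \<le> v $ i + r" for i
      using abs_nth_le_linf[of "v - z" i] by (simp add: abs_le_iff)
    then have "(\<lambda>i. z $ i) \<in> Pi\<^sub>E UNIV (\<lambda>i. {v $ i - r .. v $ i + r})"
      by (auto simp: PiE_iff)
    then show "z \<in> (\<lambda>f. \<chi> i. f i) ` (Pi\<^sub>E UNIV (\<lambda>i. {v $ i - r .. v $ i + r}))"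
      by (intro image_eqI[of _ _ "\<lambda>i. z $ i"]) simp_all
  qed
qed (intro finite_imageI finite_PiE; simp)

lemma adj_add_axis: "adj a (a + axis l 1)"
proof -
  have "l1 (a - (a + axis l 1)) = (\<Sum>i\<in>UNIV. if i = l then 1 else 0)"
    unfolding l1_def by (intro sum.cong) (auto simp: axis_def)
  then show ?thesis by (simp add: adj_def)
qed

lemma walk_connected_axis_steps:
  "(\<And>m. m \<le> n \<Longrightarrow> a + axis l (int m) \<in> A) \<Longrightarrow> walk_connected A a (a + axis l (int n))"
proof (induction n)
  case 0
  have "axis l (0::int) = 0" by (simp add: axis_def vec_eq_iff)
  then show ?case
    using 0 walk_connected_refl[of a A] by (metis add.right_neutral of_nat_0 order_refl)
next
  case (Suc n)
  have "a + axis l (int (Suc n)) = (a + axis l (int n)) + axis l 1"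
    by (simp add: axis_def vec_eq_iff)
  then have "walk_connected A (a + axis l (int n)) (a + axis l (int (Suc n)))"
    using Suc.prems adj_add_axis by (metis le_Suc_eq order_refl walk_connected_adj)
  then show ?case using Suc walk_connected_trans by (metis le_SucI)
qed

lemma walk_connected_axis:
  assumes "\<And>m. m \<noteq> l \<Longrightarrow> a $ m = b $ m"
    and "\<And>z. (\<And>m. m \<noteq> l \<Longrightarrow> z $ m = a $ m) \<Longrightarrow> min (a $ l) (b $ l) \<le> z $ l \<Longrightarrow>
           z $ l \<le> max (a $ l) (b $ l) \<Longrightarrow> z \<in> A"
  shows "walk_connected A a b"
proof -
  have ordered: "walk_connected A a b"
    if "a $ l \<le> b $ l" "\<And>m. m \<noteq> l \<Longrightarrow> a $ m = b $ m"
      and in_A: "\<And>z. (\<And>m. m \<noteq> l \<Longrightarrow> z $ m = a $ m) \<Longrightarrow> a $ l \<le> z $ l \<Longrightarrow> z $ l \<le> b $ l \<Longrightarrow> z \<in> A"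
    for a b
  proof -
    define n where "n = nat (b $ l - a $ l)"
    have "b = a + axis l (int n)"
      using that(1,2) by (auto simp: n_def axis_def vec_eq_iff)
    moreover have "a + axis l (int m) \<in> A" if "m \<le> n" for m
      using that \<open>b = a + axis l (int n)\<close> by (intro in_A) (auto simp: axis_def)
    ultimately show ?thesis using walk_connected_axis_steps by metis
  qed
  show ?thesis
  proof (cases "a $ l \<le> b $ l")
    case True
    then show ?thesis using ordered[of a b] assms by (simp add: min_def max_def)
  next
    case False
    then have "walk_connected A b a" using ordered[of b a] assms by (simp add: min_def max_def)
    then show ?thesis by (rule walk_connected_sym)
  qed
qed

definition lattice_box :: "'d::finite vtx \<Rightarrow> 'd vtx \<Rightarrow> 'd vtx set" where
  "lattice_box lo hi = {z. \<forall>l. lo $ l \<le> z $ l \<and> z $ l \<le> hi $ l}"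

lemma walk_connected_lattice_box:
  assumes y: "y \<in> lattice_box lo hi" and y': "y' \<in> lattice_box lo hi"
  shows "walk_connected (lattice_box lo hi) y y'"
proof -
  define mix where "mix L = (\<chi> l. if l \<in> L then y' $ l else y $ l)" for L
  have "walk_connected (lattice_box lo hi) y (mix L)" if "finite L" for L
    using that
  proof (induction L rule: finite_induct)
    case empty
    show ?case using y walk_connected_refl by (simp add: mix_def)
  next
    case (insert l L)
    have ends: "mix L $ l = y $ l" "mix (insert l L) $ l = y' $ l"
      using insert.hyps(2) by (simp_all add: mix_def)
    have "walk_connected (lattice_box lo hi) (mix L) (mix (insert l L))"
    proof (rule walk_connected_axis[where l = l])
      fix z assume z: "\<And>m. m \<noteq> l \<Longrightarrow> z $ m = mix L $ m"
        "min (mix L $ l) (mix (insert l L) $ l) \<le> z $ l"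
        "z $ l \<le> max (mix L $ l) (mix (insert l L) $ l)"
      have "lo $ m \<le> z $ m \<and> z $ m \<le> hi $ m" for m
        using y y' z ends unfolding lattice_box_def mix_def
        by (cases "m = l") (auto simp: min_def max_def split: if_splits intro: order_trans)
      then show "z \<in> lattice_box lo hi" by (simp add: lattice_box_def)
    qed (simp add: mix_def)
    then show ?case using insert.IH walk_connected_trans by blast
  qed
  moreover have "mix UNIV = y'" by (simp add: mix_def vec_eq_iff)
  ultimately show ?thesis by (metis finite)
qed

lemma exists_other_index:
  fixes i :: "'d::finite"
  assumes "CARD('d) \<ge> 2"
  obtains j where "j \<noteq> i"
proof -
  have "UNIV \<noteq> {i}"
  proof
    assume "UNIV = {i}"
    then have "CARD('d) = card {i}" by (rule arg_cong)
    with assms show False by simp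
  qed
  then show ?thesis using that by blast
qed

lemma linf_sphere_face:
  assumes "0 \<le> h"
  shows "lattice_box (\<chi> l. v $ l - h) (\<chi> l. if l = j then v $ j - h else v $ l + h)
    \<subseteq> {z. linf (v - z) = h}"
proof
  fix y assume "y \<in> lattice_box (\<chi> l. v $ l - h) (\<chi> l. if l = j then v $ j - h else v $ l + h)"
  then have y: "v $ l - h \<le> y $ l \<and> y $ l \<le> (if l = j then v $ j - h else v $ l + h)" for l
    by (simp add: lattice_box_def)
  have "\<bar>v $ l - y $ l\<bar> \<le> h" "\<bar>v $ j - y $ j\<bar> = h" for l
    using y[of l] y[of j] assms by (auto simp: abs_le_iff split: if_splits)
  then show "y \<in> {z. linf (v - z) = h}" by (auto simp: linf_eq_iff)
qed

lemma walk_connected_linf_sphere: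
  fixes v :: "'d::finite vtx"
  assumes "CARD('d) \<ge> 2" "1 \<le> h" "linf (v - u) = h" "linf (v - w) = h"
  shows "walk_connected {z. linf (v - z) = h} u w"
proof -
  let ?S = "{z. linf (v - z) = h}"
  define c where "c = (\<chi> l. v $ l - h)"
  have to_corner: "walk_connected ?S z c" if z: "linf (v - z) = h" for z
  proof -
    obtain i where i: "\<bar>v $ i - z $ i\<bar> = h" using z by (auto simp: linf_eq_iff)
    have z_bound: "\<bar>v $ m - z $ m\<bar> \<le> h" for m using z abs_nth_le_linf[of "v - z" m] by simp
    obtain j where "j \<noteq> i" using exists_other_index[OF assms(1)] .
    define z' where "z' = (\<chi> m. if m = j then v $ j - h else z $ m)"
    define hi where "hi = (\<chi> m. if m = j then v $ j - h else v $ m + h)"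
    have face: "lattice_box c hi \<subseteq> ?S"
      using linf_sphere_face[of h v j] assms(2) by (simp add: c_def hi_def)
    have to_face: "walk_connected ?S z z'"
    proof (rule walk_connected_axis[where l = j])
      fix y assume y: "\<And>m. m \<noteq> j \<Longrightarrow> y $ m = z $ m"
        "min (z $ j) (z' $ j) \<le> y $ j" "y $ j \<le> max (z $ j) (z' $ j)"
      have "\<bar>v $ m - y $ m\<bar> \<le> h" for m
        using y z_bound[of m] z_bound[of j] assms(2)
        by (cases "m = j") (auto simp: z'_def abs_le_iff min_def max_def split: if_splits)
      moreover have "\<bar>v $ i - y $ i\<bar> = h" using y(1) i \<open>j \<noteq> i\<close> by auto
      ultimately show "y \<in> ?S" by (auto simp: linf_eq_iff)
    qed (simp add: z'_def)
    have "walk_connected (lattice_box c hi) z' c"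
    proof (rule walk_connected_lattice_box)
      have "c $ m \<le> z' $ m \<and> z' $ m \<le> hi $ m" for m
        using z_bound[of m] assms(2) by (auto simp: c_def hi_def z'_def abs_le_iff)
      then show "z' \<in> lattice_box c hi" by (simp add: lattice_box_def)
      show "c \<in> lattice_box c hi" using assms(2) by (simp add: lattice_box_def c_def hi_def)
    qed
    then show ?thesis using walk_connected_trans[OF to_face walk_connected_mono[OF _ face]] by blast
  qed
  show ?thesis
    using walk_connected_trans[OF to_corner[OF assms(3)]
        walk_connected_sym[OF to_corner[OF assms(4)]]] .
qed

lemma walk_connected_avoiding_level_below:
  fixes g :: "'d::finite vtx \<Rightarrow> int"
  assumes lipschitz: "\<And>a b. adj a b \<Longrightarrow> \<bar>g a - g b\<bar> \<le> 1"
    and "walk_connected (- {z. g z = c}) y z" "g y < c"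
  shows "g z < c"
proof -
  have "\<forall>z\<in>set p. g z < c" if "is_walk p" "set p \<subseteq> - {z. g z = c}" "g (hd p) < c" for p
    using that
  proof (induction p rule: induct_list012)
    case (3 x x' zs)
    have "adj x x'" "g x' \<noteq> c" "g x < c" using "3.prems" by auto
    then have "g x' < c" using lipschitz[of x x'] by arith
    then show ?case using 3 by auto
  qed auto
  with assms(2,3) show ?thesis unfolding walk_connected_def by (metis last_in_set not_is_walk_Nil)
qed

lemma outside_if_linf_sphere_not_encloses:
  assumes "\<not> encloses {z. linf (v - z) = r} y"
  shows "r < linf (v - y)"
proof (rule ccontr)
  let ?S = "{z. linf (v - z) = r}"
  assume "\<not> r < linf (v - y)"
  moreover have "y \<notin> ?S" using assms by (simp add: encloses_def)
  ultimately have inside: "linf (v - y) < r" by simp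
  have "linf (v - z) < r" if "conn_avoid ?S y z" for z
  proof (rule walk_connected_avoiding_level_below[of "\<lambda>z. linf (v - z)",
        OF linf_diff_adj_le_1 _ inside])
    show "walk_connected (- ?S) y z"
      using that unfolding conn_avoid_def walk_connected_def by blast
  qed
  then have "finite {z. conn_avoid ?S y z}"
    using finite_subset[OF _ finite_linf_ball] by (metis mem_Collect_eq subsetI)
  then show False using assms by (simp add: encloses_def)
qed

section \<open>Crossing the spheres around an edge of a geodesic\<close>

lemma discrete_ivt:
  fixes g :: "nat \<Rightarrow> int"
  assumes "a \<le> b" and steps: "\<And>n. a \<le> n \<Longrightarrow> n < b \<Longrightarrow> \<bar>g (Suc n) - g n\<bar> \<le> 1"
    and "g a \<le> c \<and> c \<le> g b \<or> g b \<le> c \<and> c \<le> g a"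
  shows "\<exists>n. a \<le> n \<and> n \<le> b \<and> g n = c"
proof -
  have up: "\<exists>n. a \<le> n \<and> n \<le> b \<and> f n = t"
    if "a \<le> b" "\<And>n. a \<le> n \<Longrightarrow> n < b \<Longrightarrow> \<bar>f (Suc n) - f n\<bar> \<le> 1" "f a \<le> t" "t \<le> f b"
    for f :: "nat \<Rightarrow> int" and b t
    using that
  proof (induction b)
    case (Suc b)
    show ?case
    proof (cases "a \<le> b \<and> t \<le> f b")
      case True
      then show ?thesis using Suc by (metis le_SucI less_SucI)
    next
      case False
      then consider "a = Suc b" | "a \<le> b" "f b < t" using Suc.prems(1) by linarith
      then show ?thesis
      proof cases
        case 2
        then have "f (Suc b) = t" using Suc.prems(2)[of b] Suc.prems(4) by auto
        then show ?thesis using Suc.prems(1) by blast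
      qed (use Suc.prems in auto)
    qed
  qed auto
  show ?thesis
  proof (cases "g a \<le> c \<and> c \<le> g b")
    case True
    then show ?thesis using up[where f = g, OF \<open>a \<le> b\<close> steps] by blast
  next
    case False
    then have "- g a \<le> - c" "- c \<le> - g b" using assms(3) by auto
    then show ?thesis using up[where f = "\<lambda>n. - g n" and t = "- c"] \<open>a \<le> b\<close> steps by fastforce
  qed
qed

lemma walk_meets_linf_sphere:
  assumes "is_walk p" "i \<le> j" "j < length p"
    and "linf (v - p ! i) \<le> h \<and> h \<le> linf (v - p ! j) \<or> linf (v - p ! j) \<le> h \<and> h \<le> linf (v - p ! i)"
  shows "\<exists>n. i \<le> n \<and> n \<le> j \<and> linf (v - p ! n) = h"
proof (rule discrete_ivt[of i j "\<lambda>n. linf (v - p ! n)", OF assms(2) _ assms(4)])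
  fix n assume "n < j"
  then have "adj (p ! n) (p ! Suc n)" using assms(1,3) unfolding is_walk_def by auto
  then show "\<bar>linf (v - p ! Suc n) - linf (v - p ! n)\<bar> \<le> 1"
    using linf_diff_adj_le_1 by (metis abs_minus_commute)
qed

lemma v_e_mem: "e \<in> edges \<Longrightarrow> v_e e \<in> e"
proof -
  assume "e \<in> edges"
  then obtain a b where e: "e = {a, b}" unfolding edges_def by auto
  have "\<exists>v. v \<in> e \<and> (\<forall>w\<in>e. l1 v \<le> l1 w)"
    by (cases "l1 a \<le> l1 b") (auto simp: e)
  then show ?thesis unfolding v_e_def by (rule someI2_ex) auto
qed

lemma Sv_eq_linf_sphere: "h \<noteq> 0 \<Longrightarrow> Sv e h = {z. linf (v_e e - z) = int h}"
  by (simp add: Sv_def)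

lemma Se_eq_sphere_edges: "h \<noteq> 0 \<Longrightarrow> Se e h = {{a, b} | a b. adj a b \<and> a \<in> Sv e h \<and> b \<in> Sv e h}"
  by (simp add: Se_def)

lemma walk_through_edge_crosses_Sv:
  fixes p :: "'d::finite vtx list"
  assumes "CARD('d) \<ge> 2" "is_walk p" and e: "e = {p ! i, p ! Suc i}" "Suc i < length p"
    and "0 < h" "h \<le> k" "\<not> encloses (Sv e k) (hd p)" "\<not> encloses (Sv e k) (last p)"
  obtains a b q where "a \<le> i" "Suc i \<le> b" "b < length p" "p ! a \<in> Sv e h" "p ! b \<in> Sv e h"
    "sap (p ! a) (p ! b) q" "path_edges q \<subseteq> Se e h"
proof -
  define v where "v = v_e e"
  have adj: "adj (p ! i) (p ! Suc i)" using assms(2) e(2) unfolding is_walk_def by blast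
  have "e \<in> edges" using walk_step_in_edges[OF assms(2) e(2)] e(1) by simp
  then have "v \<in> e" by (simp add: v_def v_e_mem)
  with e(1) have "v \<in> {p ! i, p ! Suc i}" by simp
  then have "linf (v - p ! i) \<le> 1" "linf (v - p ! Suc i) \<le> 1"
    using linf_le_1_if_mem_edge[OF adj] by simp_all
  then have inner: "linf (v - p ! i) \<le> int h" "linf (v - p ! Suc i) \<le> int h"
    using assms(5) by linarith+
  have "int k < linf (v - hd p)" "int k < linf (v - last p)"
    using outside_if_linf_sphere_not_encloses assms(5-8) Sv_eq_linf_sphere[of k e]
    by (auto simp: v_def)
  moreover have "p \<noteq> []" using e(2) by auto
  ultimately have outer: "int h \<le> linf (v - p ! 0)" "int h \<le> linf (v - p ! (length p - 1))"
    using assms(6)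
    by (metis hd_conv_nth last_conv_nth of_nat_mono order.strict_implies_order order.trans)+
  have "0 \<le> i" "i < length p" using e(2) by auto
  then obtain a where a: "a \<le> i" "linf (v - p ! a) = int h"
    using walk_meets_linf_sphere[OF assms(2)] inner(1) outer(1) by blast
  have "Suc i \<le> length p - 1" "length p - 1 < length p" using e(2) by auto
  then obtain b where b: "Suc i \<le> b" "b \<le> length p - 1" "linf (v - p ! b) = int h"
    using walk_meets_linf_sphere[OF assms(2)] inner(2) outer(2) by blast
  have Sv_h: "Sv e h = {z. linf (v - z) = int h}"
    using Sv_eq_linf_sphere assms(5) by (simp add: v_def)
  have "walk_connected (Sv e h) (p ! a) (p ! b)"
    unfolding Sv_h using walk_connected_linf_sphere[OF assms(1)] a(2) b(3) assms(5) by simp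
  then obtain q where "sap (p ! a) (p ! b) q"
    and "path_edges q \<subseteq> {{a, b} | a b. adj a b \<and> a \<in> Sv e h \<and> b \<in> Sv e h}"
    using walk_connected_sap by blast
  moreover have "path_edges q \<subseteq> Se e h"
    using calculation(2) Se_eq_sphere_edges[of h e] assms(5) by simp
  moreover have "p ! a \<in> Sv e h" "p ! b \<in> Sv e h" "b < length p"
    using a(2) b e(2) unfolding Sv_h by auto
  ultimately show ?thesis using that a(1) b(1) by blast
qed

lemma path_edges_pair: "path_edges [u, w] = {{u, w}}"
  by (simp add: path_edges_def)

lemma walk_edge_in_S0:
  assumes "is_walk p" "distinct p" "Suc i < length p" "e = {p ! i, p ! Suc i}"
  shows "p ! i \<in> Sv e 0" "p ! Suc i \<in> Sv e 0"
    "sap (p ! i) (p ! Suc i) [p ! i, p ! Suc i]" "path_edges [p ! i, p ! Suc i] \<subseteq> Se e 0"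
proof -
  have "p ! i \<noteq> p ! Suc i" using assms(2,3) by (simp add: nth_eq_iff_index_eq)
  moreover have "adj (p ! i) (p ! Suc i)" using assms(1,3) by (simp add: is_walk_def)
  ultimately show "sap (p ! i) (p ! Suc i) [p ! i, p ! Suc i]" by (simp add: sap_def)
qed (use assms(4) in \<open>simp_all add: Sv_def Se_def path_edges_pair\<close>)

lemma walk_edge_Sv_crossings:
  fixes p :: "'d::finite vtx list"
  assumes "CARD('d) \<ge> 2" "is_walk p" "distinct p" and e: "e = {p ! i, p ! Suc i}" "Suc i < length p"
    and "h \<le> k" "\<not> encloses (Sv e k) (hd p)" "\<not> encloses (Sv e k) (last p)"
  obtains a b q where "a \<le> i" "Suc i \<le> b" "b < length p" "p ! a \<in> Sv e h" "p ! b \<in> Sv e h"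
    "sap (p ! a) (p ! b) q" "path_edges q \<subseteq> Se e h"
proof (cases "h = 0")
  case True
  with walk_edge_in_S0[OF assms(2,3) e(2,1)] show ?thesis
    by (intro that[OF order_refl order_refl e(2)]) simp_all
next
  case False
  then have "0 < h" by simp
  show ?thesis
    by (rule walk_through_edge_crosses_Sv[OF assms(1,2) e \<open>0 < h\<close> assms(6-8)]) (rule that)
qed

lemma geodesic_segment_le_walk:
  assumes nonneg: "\<forall>f\<in>edges. \<tau> f \<ge> 0" and geo: "geodesic \<tau> x \<pi>"
    and ab: "a \<le> b" "b < length \<pi>"
    and r: "is_walk r" "hd r = \<pi> ! a" "last r = \<pi> ! b"
  shows "(\<Sum>m\<in>{a..<b}. \<tau> {\<pi> ! m, \<pi> ! Suc m}) \<le> T \<tau> r"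
proof -
  define t where "t m = \<tau> {\<pi> ! m, \<pi> ! Suc m}" for m
  have \<pi>: "is_walk \<pi>" "hd \<pi> = 0" "last \<pi> = x" and shortest: "\<And>q. sap 0 x q \<Longrightarrow> T \<tau> \<pi> \<le> T \<tau> q"
    using geo by (auto simp: geodesic_def sap_def)
  let ?P = "take (Suc a) \<pi>" and ?Q = "drop b \<pi>"
  have P: "?P \<noteq> []" "is_walk ?P" "hd ?P = 0" "T \<tau> ?P = (\<Sum>m<a. t m)"
    using ab \<pi> is_walk_take[of \<pi> "Suc a"] T_take_Suc[of a \<pi> \<tau>] by (auto simp: t_def)
  have P_last: "last ?P = \<pi> ! a" using ab by (simp add: take_Suc_conv_app_nth)
  have Q: "?Q \<noteq> []" "is_walk ?Q" "hd ?Q = \<pi> ! b" "last ?Q = x"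
    "T \<tau> ?Q = (\<Sum>m\<in>{b..<length \<pi> - 1}. t m)"
    using ab \<pi> is_walk_drop[of \<pi> b] by (auto simp: t_def T_drop hd_drop_conv_nth)
  define W where "W = (?P @ tl r) @ tl ?Q"
  have r_ne: "r \<noteq> []" using r(1) by auto
  have Pr: "?P @ tl r \<noteq> []" "last (?P @ tl r) = \<pi> ! b" "is_walk (?P @ tl r)"
    "T \<tau> (?P @ tl r) = T \<tau> ?P + T \<tau> r"
    using P P_last r r_ne last_append_tl[of ?P r] is_walk_append_tl[of ?P r] T_append_tl[of ?P r]
    by auto
  have W: "is_walk W" "hd W = 0" "last W = x" "T \<tau> W = T \<tau> ?P + T \<tau> r + T \<tau> ?Q"
    using Pr Q P last_append_tl[of "?P @ tl r" ?Q] is_walk_append_tl[of "?P @ tl r" ?Q]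
      T_append_tl[of "?P @ tl r" ?Q]
    by (auto simp: W_def)
  obtain W' where "sap 0 x W'" "T \<tau> W' \<le> T \<tau> W"
    using walk_contains_sap[OF nonneg W(1)] W(2,3) by auto
  then have "T \<tau> \<pi> \<le> T \<tau> W" using shortest by fastforce
  moreover have "T \<tau> \<pi> = (\<Sum>m<a. t m) + (\<Sum>m\<in>{a..<b}. t m) + (\<Sum>m\<in>{b..<length \<pi> - 1}. t m)"
    using ab unfolding T_def t_def
    by (simp add: atLeast0LessThan[symmetric] sum.atLeastLessThan_concat)
  ultimately show ?thesis using W(4) P(4) Q(5) by (simp add: t_def)
qed

lemma geodesic_edge_le_detour:
  assumes nonneg: "\<forall>f\<in>edges. \<tau> f \<ge> 0" and geo: "geodesic \<tau> x \<pi>"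
    and "a \<le> i" "Suc i \<le> b" "b < length \<pi>"
    and "is_walk r" "hd r = \<pi> ! a" "last r = \<pi> ! b"
  shows "\<tau> {\<pi> ! i, \<pi> ! Suc i} \<le> T \<tau> r"
proof -
  have "is_walk \<pi>" using geo by (simp add: geodesic_def sap_def)
  then have "0 \<le> \<tau> {\<pi> ! m, \<pi> ! Suc m}" if "m \<in> {a..<b}" for m
    using that assms(5) nonneg walk_step_in_edges[OF \<open>is_walk \<pi>\<close>, of m] by auto
  then have "\<tau> {\<pi> ! i, \<pi> ! Suc i} \<le> (\<Sum>m\<in>{a..<b}. \<tau> {\<pi> ! m, \<pi> ! Suc m})"
    using assms(3,4) by (intro member_le_sum) auto
  also have "\<dots> \<le> T \<tau> r"
    using geodesic_segment_le_walk[OF nonneg geo _ assms(5-8)] assms(3,4) by simp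
  finally show ?thesis .
qed

text \<open>The witness q is needed because T_restr is an infimum and Inf {} is unspecified.\<close>

lemma le_T_restr:
  assumes "sap u w q" "path_edges q \<subseteq> S" "\<And>r. sap u w r \<Longrightarrow> M \<le> T \<tau> r"
  shows "M \<le> T_restr \<tau> S u w"
  unfolding T_restr_def using assms by (intro cInf_greatest) auto

theorem lemma3p1:
  fixes \<tau> :: "'d::finite edge \<Rightarrow> real"
    and ord :: "'d vtx list \<Rightarrow> nat"
    and e :: "'d edge" and M :: real and x :: "'d vtx" and \<pi> :: "'d vtx list" and k :: nat
  assumes "CARD('d) \<ge> 2"
    and "\<forall>f\<in>edges. \<tau> f \<ge> 0"
    and "inj ord"
    and "first_geodesic ord \<tau> x \<pi>"
    and "e \<in> edges"
    and "M > 0"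
    and "e \<in> path_edges \<pi>"
    and "\<tau> e \<ge> M"
    and "\<not> encloses (Sv e k) 0"
    and "\<not> encloses (Sv e k) x"
  shows "large \<tau> e k M"
proof -
  have geo: "geodesic \<tau> x \<pi>" using assms(4) by (simp add: first_geodesic_def)
  then have \<pi>: "is_walk \<pi>" "distinct \<pi>" "hd \<pi> = 0" "last \<pi> = x" by (auto simp: geodesic_def sap_def)
  obtain i where e: "e = {\<pi> ! i, \<pi> ! Suc i}" and i: "Suc i < length \<pi>"
    using assms(7) unfolding path_edges_def by blast
  have detour: "M \<le> T \<tau> r" if "a \<le> i" "Suc i \<le> b" "b < length \<pi>" "sap (\<pi> ! a) (\<pi> ! b) r" for a b r
  proof -
    have "\<tau> e \<le> T \<tau> r"
      unfolding e using that(4) geodesic_edge_le_detour[OF assms(2) geo that(1-3)]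
      by (simp add: sap_def)
    with assms(8) show ?thesis by linarith
  qed
  show ?thesis unfolding large_def
  proof (intro allI impI)
    fix h assume "h \<le> k"
    obtain a b q where ab: "a \<le> i" "Suc i \<le> b" "b < length \<pi>" "\<pi> ! a \<in> Sv e h" "\<pi> ! b \<in> Sv e h"
      "sap (\<pi> ! a) (\<pi> ! b) q" "path_edges q \<subseteq> Se e h"
      by (rule walk_edge_Sv_crossings[OF assms(1) \<pi>(1,2) e i \<open>h \<le> k\<close>
            assms(9)[folded \<pi>(3)] assms(10)[folded \<pi>(4)]])
    then show "\<exists>u\<in>Sv e h. \<exists>w\<in>Sv e h. M \<le> T_restr \<tau> (Se e h) u w"
      using le_T_restr[OF ab(6,7) detour[OF ab(1-3)]] by blast
  qed
qed

end
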